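(* \begin{enumerate} \item The element $\{1\}$ is a cancellative prime element of $\mathcal P_{\mathrm{fin}}(\mathbb N_0)$, and $\mathcal P_{\mathrm{fin}}(\mathbb N_0)=F\times\mathcal P_{\mathrm{fin},0}(\mathbb N_0)$, where $F$ is the free abelian monoid generated by $\{1\}$. Moreover, $\mathcal P_{\mathrm{fin}}(\mathbb N_0)$ is fully elastic. \item Let $R=D[X_1,\dots,X_n]$ be the polynomial ring in $n\ge2$ indeterminates over a domain $D$ such that $\mathcal I(R)$ is a BF-monoid. Then $\mathcal P_{\mathrm{fin}}(\mathbb N_0)$ is isomorphic to a submonoid of $\mathcal I(R)$. \end{enumerate}
   Context: $\mathcal P_{\mathrm{fin}}(\mathbb N_0)$ (the power monoid) is the set of finite nonempty subsets of $\mathbb N_0$ with set addition $A+B=\{a+b:a\in A,b\in B\}$ as operation (identity $\{0\}$); $\mathcal P_{\mathrm{fin},0}(\mathbb N_0)$ is its submonoid of sets containing $0$. These are commutative, reduced, unit-cancellative. An element $p$ is prime if it is a non-unit and $p\mid a+b$ implies $p\mid a$ or $p\mid b$; cancellative if $p+b=p+c$ implies $b=c$. $\mathcal I(R)$ is the semigroup of nonzero ideals under multiplication. Arithmetic notions: atoms; $\mathsf L(a)$ = set of lengths of factorizations of $a$ into atoms (up to units); $\mathcal L(H)=\{\mathsf L(a)\}$; BF-monoid: all $\mathsf L(a)$ finite nonempty; $\rho(L)=\max L/\min L$, $\rho(\{0\})=1$, $\rho(H)=\sup\rho(L)$; fully elastic: every rational $q$ with $1<q<\rho(H)$ equals $\rho(L)$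 for some $L\in\mathcal L(H)$. *)

theory Defs
  imports Complex_Main "HOL-Library.Poly_Mapping" "HOL-Library.Extended_Real"
begin

definition mdvd :: "'m set \<Rightarrow> ('m \<Rightarrow> 'm \<Rightarrow> 'm) \<Rightarrow> 'm \<Rightarrow> 'm \<Rightarrow> bool" where
  "mdvd S f a b \<longleftrightarrow> (\<exists>c\<in>S. b = f a c)"

definition munit :: "'m set \<Rightarrow> ('m \<Rightarrow> 'm \<Rightarrow> 'm) \<Rightarrow> 'm \<Rightarrow> 'm \<Rightarrow> bool" where
  "munit S f e u \<longleftrightarrow> u \<in> S \<and> (\<exists>v\<in>S. f u v = e)"

definition matom :: "'m set \<Rightarrow> ('m \<Rightarrow> 'm \<Rightarrow> 'm) \<Rightarrow> 'm \<Rightarrow> 'm \<Rightarrow> bool" where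
  "matom S f e a \<longleftrightarrow> a \<in> S \<and> \<not> munit S f e a \<and>
     (\<forall>b\<in>S. \<forall>c\<in>S. a = f b c \<longrightarrow> munit S f e b \<or> munit S f e c)"

definition mprime :: "'m set \<Rightarrow> ('m \<Rightarrow> 'm \<Rightarrow> 'm) \<Rightarrow> 'm \<Rightarrow> 'm \<Rightarrow> bool" where
  "mprime S f e p \<longleftrightarrow> p \<in> S \<and> \<not> munit S f e p \<and>
     (\<forall>a\<in>S. \<forall>b\<in>S. mdvd S f p (f a b) \<longrightarrow> mdvd S f p a \<or> mdvd S f p b)"

definition mcancellative :: "'m set \<Rightarrow> ('m \<Rightarrow> 'm \<Rightarrow> 'm) \<Rightarrow> 'm \<Rightarrow> bool" where
  "mcancellative S f p \<longleftrightarrow> p \<in> S \<and> (\<forall>b\<in>S. \<forall>c\<in>S. f p b = f p c \<longrightarrow> b = c)"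

definition mprod :: "('m \<Rightarrow> 'm \<Rightarrow> 'm) \<Rightarrow> 'm \<Rightarrow> 'm list \<Rightarrow> 'm" where
  "mprod f e xs = foldr f xs e"

definition mlengths :: "'m set \<Rightarrow> ('m \<Rightarrow> 'm \<Rightarrow> 'm) \<Rightarrow> 'm \<Rightarrow> 'm \<Rightarrow> nat set" where
  "mlengths S f e a = {length xs | xs. set xs \<subseteq> {x. matom S f e x} \<and>
       (\<exists>u. munit S f e u \<and> a = f u (mprod f e xs))}"

definition BF_monoid :: "'m set \<Rightarrow> ('m \<Rightarrow> 'm \<Rightarrow> 'm) \<Rightarrow> 'm \<Rightarrow> bool" where
  "BF_monoid S f e \<longleftrightarrow> (\<forall>a\<in>S. finite (mlengths S f e a) \<and> mlengths S f e a \<noteq> {})"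

definition rho_len :: "nat set \<Rightarrow> ereal" where
  "rho_len L = (if L = {0} then 1 else ereal (real (Max L) / real (Min L)))"

definition rho_monoid :: "'m set \<Rightarrow> ('m \<Rightarrow> 'm \<Rightarrow> 'm) \<Rightarrow> 'm \<Rightarrow> ereal" where
  "rho_monoid S f e = (SUP a\<in>S. rho_len (mlengths S f e a))"

definition fully_elastic :: "'m set \<Rightarrow> ('m \<Rightarrow> 'm \<Rightarrow> 'm) \<Rightarrow> 'm \<Rightarrow> bool" where
  "fully_elastic S f e \<longleftrightarrow> (\<forall>q::rat. 1 < q \<and> ereal (real_of_rat q) < rho_monoid S f e \<longrightarrow>
      (\<exists>a\<in>S. rho_len (mlengths S f e a) = ereal (real_of_rat q)))"

definition sumset :: "nat set \<Rightarrow> nat set \<Rightarrow> nat set" where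
  "sumset A B = {a + b | a b. a \<in> A \<and> b \<in> B}"

definition Pfin :: "nat set set" where
  "Pfin = {A. finite A \<and> A \<noteq> {}}"

definition Pfin0 :: "nat set set" where
  "Pfin0 = {A. finite A \<and> A \<noteq> {} \<and> 0 \<in> A}"

definition setpow :: "nat \<Rightarrow> nat set \<Rightarrow> nat set" where
  "setpow k A = ((sumset A) ^^ k) {0}"

definition Fgen :: "nat set set" where
  "Fgen = {setpow k {1} | k. True}"

definition is_ideal :: "'r::comm_ring_1 set \<Rightarrow> bool" where
  "is_ideal I \<longleftrightarrow> 0 \<in> I \<and> (\<forall>a\<in>I. \<forall>b\<in>I. a + b \<in> I) \<and> (\<forall>a\<in>I. \<forall>r. r * a \<in> I)"

definition nonzero_ideals :: "'r::comm_ring_1 set set" where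
  "nonzero_ideals = {I. is_ideal I \<and> I \<noteq> {0}}"

definition ideal_prod :: "'r::comm_ring_1 set \<Rightarrow> 'r set \<Rightarrow> 'r set" where
  "ideal_prod I J = \<Inter>{K. is_ideal K \<and> {a * b | a b. a \<in> I \<and> b \<in> J} \<subseteq> K}"

text \<open>Polynomial ring D[X_v | v :: 'v] (for finite 'v, n = CARD('v) indeterminates).\<close>
type_synonym ('v, 'a) mpoly_ring = "('v \<Rightarrow>\<^sub>0 nat) \<Rightarrow>\<^sub>0 'a"

end

theory Submission
  imports Defs
begin

(* {1} divides exactly the sets avoiding 0, which makes it prime, and shifting by min A
   splits every A as {min A} + (A - min A).

   The only atom of the power monoid avoiding 0 is {1}, so a factorization of the interval
   [k, k+N] consists of k copies of {1} together with a factorization of [0, N].  For even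
   N \<ge> 2 the interval [0, N] is not an atom, has the factorization
   {0,1} + ({0} \<union> {odd numbers < N}) into two atoms and the factorization into N copies
   of {0,1}; as every atom has maximum at least 1, the lengths of [k, k+N] range exactly
   from k+2 to k+N.  These elasticities (k+N)/(k+2) exhaust the rationals > 1.

   For the embedding into the ideals of D[X, Y, ...], send A to the monomial ideal generated
   by X^a Y^(max A - a) for a \<in> A: products of monomial ideals are generated by the products
   of the generators, and homogenising by max A makes the generators determine A. *)

section \<open>Sumsets\<close>

lemma sumset_iff: "z \<in> sumset A B \<longleftrightarrow> (\<exists>a\<in>A. \<exists>b\<in>B. z = a + b)"
  by (auto simp: sumset_def)

lemma sumset_commute: "sumset A B = sumset B A"
  unfolding sumset_def by (auto, metis add.commute, metis add.commute)

lemma sumset_assoc: "sumset (sumset A B) C = sumset A (sumset B C)"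
  unfolding sumset_def by (auto, metis add.assoc, metis add.assoc)

lemma sumset_left_commute: "sumset A (sumset B C) = sumset B (sumset A C)"
  by (metis sumset_assoc sumset_commute)

lemma sumset_zero_left [simp]: "sumset {0} A = A"
  by (auto simp: sumset_iff)

lemma sumset_zero_right [simp]: "sumset A {0} = A"
  by (auto simp: sumset_iff)

lemma sumset_singleton: "sumset {k} B = (+) k ` B"
  by (auto simp: sumset_iff)

lemma sumset_singleton_cancel: "sumset {k} A = sumset {k} B \<Longrightarrow> A = B"
  by (simp add: sumset_singleton inj_image_eq_iff)

lemma sumset_shift:
  assumes "\<forall>x\<in>A. k \<le> x"
  shows "A = sumset {k} ((\<lambda>x. x - k) ` A)"
proof -
  have "(\<lambda>x. k + (x - k)) ` A = (\<lambda>x. x) ` A"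
    using assms by (intro image_cong) auto
  then show ?thesis
    unfolding sumset_singleton image_image by simp
qed

lemma sumset_shift_1: "0 \<notin> A \<Longrightarrow> A = sumset {1} ((\<lambda>x. x - 1) ` A)"
  by (rule sumset_shift) (auto simp: Suc_le_eq intro!: gr0I)

lemma sumset_singleton_interval: "sumset {k} {0..N} = {k..k+N}"
  by (simp add: sumset_singleton add.commute)

lemma zero_in_sumset_iff: "0 \<in> sumset A B \<longleftrightarrow> 0 \<in> A \<and> 0 \<in> B"
  by (auto simp: sumset_iff)

lemma subset_sumset: "0 \<in> B \<Longrightarrow> A \<subseteq> sumset A B"
  by (force simp: sumset_iff)

lemma sumset_in_Pfin:
  assumes "A \<in> Pfin" "B \<in> Pfin"
  shows "sumset A B \<in> Pfin"
proof -
  have "sumset A B = (\<lambda>(a, b). a + b) ` (A \<times> B)"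
    by (auto simp: sumset_def)
  with assms show ?thesis
    by (simp add: Pfin_def)
qed

lemma Max_sumset:
  assumes "A \<in> Pfin" "B \<in> Pfin"
  shows "Max (sumset A B) = Max A + Max B"
proof (rule Max_eqI)
  show "finite (sumset A B)"
    using sumset_in_Pfin[OF assms] by (simp add: Pfin_def)
  show "y \<le> Max A + Max B" if "y \<in> sumset A B" for y
    using that assms by (auto simp: sumset_iff Pfin_def intro!: add_mono)
  have "Max A \<in> A" "Max B \<in> B"
    using assms by (auto simp: Pfin_def)
  then show "Max A + Max B \<in> sumset A B"
    by (auto simp: sumset_iff)
qed

lemma singleton_in_Pfin [simp]: "{k} \<in> Pfin"
  by (simp add: Pfin_def)

lemma Pfin_Max_eq_0:
  assumes "A \<in> Pfin" "Max A = 0"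
  shows "A = {0}"
proof -
  have "finite A" "A \<noteq> {}"
    using assms(1) by (auto simp: Pfin_def)
  then have "\<forall>x\<in>A. x = 0"
    using Max_ge assms(2) by fastforce
  with \<open>A \<noteq> {}\<close> show ?thesis
    by auto
qed

section \<open>Units, atoms and factorizations in the power monoid\<close>

lemma munit_Pfin_iff: "munit Pfin sumset {0} u \<longleftrightarrow> u = {0}"
proof
  assume "munit Pfin sumset {0} u"
  then obtain v where u: "u \<in> Pfin" and "v \<in> Pfin" and uv: "sumset u v = {0}"
    by (auto simp: munit_def)
  then obtain b where "b \<in> v"
    by (auto simp: Pfin_def)
  have "a = 0" if "a \<in> u" for a
  proof -
    have "a + b \<in> sumset u v"
      using that \<open>b \<in> v\<close> by (auto simp: sumset_iff)
    then show "a = 0"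
      using uv by simp
  qed
  with u show "u = {0}"
    by (auto simp: Pfin_def)
qed (auto simp: munit_def intro!: bexI[of _ "{0}"])

abbreviation Pfin_atom :: "nat set \<Rightarrow> bool" where
  "Pfin_atom \<equiv> matom Pfin sumset {0}"

lemma Pfin_atom_iff: "Pfin_atom a \<longleftrightarrow> a \<in> Pfin \<and> a \<noteq> {0} \<and>
    (\<forall>b\<in>Pfin. \<forall>c\<in>Pfin. a = sumset b c \<longrightarrow> b = {0} \<or> c = {0})"
  by (simp add: matom_def munit_Pfin_iff)

lemma Pfin_atom_if_Max_eq_1:
  assumes "a \<in> Pfin" "Max a = 1"
  shows "Pfin_atom a"
  unfolding Pfin_atom_iff
proof (intro conjI ballI impI)
  fix b c assume "b \<in> Pfin" "c \<in> Pfin" "a = sumset b c"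
  with assms have "Max b = 0 \<or> Max c = 0"
    by (auto simp: Max_sumset add_is_1)
  with \<open>b \<in> Pfin\<close> \<open>c \<in> Pfin\<close> show "b = {0} \<or> c = {0}"
    using Pfin_Max_eq_0 by blast
qed (use assms in auto)

lemma Max_Pfin_atom_ge_1:
  assumes "Pfin_atom a"
  shows "1 \<le> Max a"
proof (rule ccontr)
  assume "\<not> 1 \<le> Max a"
  then have "Max a = 0"
    by simp
  moreover have "a \<in> Pfin" "a \<noteq> {0}"
    using assms by (simp_all add: Pfin_atom_iff)
  ultimately show False
    using Pfin_Max_eq_0 by blast
qed

lemma Pfin_atom_without_zero:
  assumes a: "Pfin_atom a" and "0 \<notin> a"
  shows "a = {1}"
proof -
  let ?c = "(\<lambda>x. x - 1) ` a"
  have irreducible: "\<forall>b\<in>Pfin. \<forall>c\<in>Pfin. a = sumset b c \<longrightarrow> b = {0} \<or> c = {0}"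
    and "a \<in> Pfin"
    using a by (simp_all add: Pfin_atom_iff)
  then have "?c \<in> Pfin"
    by (simp add: Pfin_def)
  have "a = sumset {1} ?c"
    using \<open>0 \<notin> a\<close> by (rule sumset_shift_1)
  then have "{1::nat} = {0} \<or> ?c = {0}"
    using bspec[OF bspec[OF irreducible singleton_in_Pfin] \<open>?c \<in> Pfin\<close>] by (rule rev_mp)
  then have "?c = {0}"
    by simp
  with \<open>a = sumset {1} ?c\<close> show ?thesis
    by simp
qed

definition zero_and_odds :: "nat \<Rightarrow> nat set" where
  "zero_and_odds p = insert 0 {i. odd i \<and> i \<le> p}"

lemma zero_and_odds_in_Pfin: "zero_and_odds p \<in> Pfin"
  by (simp add: zero_and_odds_def Pfin_def)

lemma Pfin_atom_zero_and_odds: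
  assumes p: "odd p"
  shows "Pfin_atom (zero_and_odds p)"
  unfolding Pfin_atom_iff
proof (intro conjI ballI impI zero_and_odds_in_Pfin)
  show "zero_and_odds p \<noteq> {0}"
    using p by (auto simp: zero_and_odds_def)
  fix b c assume b: "b \<in> Pfin" and c: "c \<in> Pfin" and bc: "zero_and_odds p = sumset b c"
  show "b = {0} \<or> c = {0}"
  proof (rule ccontr)
    assume nontrivial: "\<not> (b = {0} \<or> c = {0})"
    \<comment> \<open>both factors contain 0, hence lie in the set, so their maxima are odd\<close>
    have "0 \<in> b" "0 \<in> c"
      using bc zero_in_sumset_iff by (auto simp: zero_and_odds_def)
    then have "b \<subseteq> zero_and_odds p" "c \<subseteq> zero_and_odds p"
      using bc subset_sumset sumset_commute by metis+
    moreover have "Max b \<in> b" "Max c \<in> c" "Max b \<noteq> 0" "Max c \<noteq> 0"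
      using b c nontrivial Pfin_Max_eq_0 by (auto simp: Pfin_def)
    ultimately have "odd (Max b)" "odd (Max c)"
      by (auto simp: zero_and_odds_def)
    moreover have "Max (zero_and_odds p) = p"
      using p by (intro Max_eqI) (auto simp: zero_and_odds_def)
    then have "Max b + Max c = p"
      using Max_sumset[OF b c] bc by simp
    ultimately show False
      using p by (metis even_add)
  qed
qed

lemma sumset_01_zero_and_odds:
  assumes "odd p"
  shows "sumset {0, 1} (zero_and_odds p) = {0..p+1}"
proof (intro equalityI subsetI)
  fix x assume x: "x \<in> {0..p+1}"
  show "x \<in> sumset {0, 1} (zero_and_odds p)"
  proof (cases "x = 0 \<or> odd x")
    case True
    with x assms have "x \<in> zero_and_odds p"
      by (auto simp: zero_and_odds_def) (metis even_Suc le_SucE)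
    then show ?thesis
      by (force simp: sumset_iff)
  next
    case False
    with x have "x - 1 \<in> zero_and_odds p" "x = 1 + (x - 1)"
      by (auto simp: zero_and_odds_def)
    then show ?thesis
      by (auto simp: sumset_iff)
  qed
qed (auto simp: sumset_iff zero_and_odds_def)

lemma sumset_01_interval: "sumset {0, 1} {0..j} = {0..Suc j}"
proof (intro equalityI subsetI)
  fix x assume "x \<in> {0..Suc j}"
  then show "x \<in> sumset {0, 1} {0..j}"
    by (cases x) (force simp: sumset_iff)+
qed (auto simp: sumset_iff)

lemma interval_not_Pfin_atom:
  assumes "odd p"
  shows "\<not> Pfin_atom {0..p+1}"
proof -
  have "{0, 1} \<in> Pfin" "{0, 1} \<noteq> {0::nat}" "zero_and_odds p \<noteq> {0}"
    using assms by (auto simp: Pfin_def zero_and_odds_def)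
  then show ?thesis
    using sumset_01_zero_and_odds[OF assms] zero_and_odds_in_Pfin
    unfolding Pfin_atom_iff by metis
qed

abbreviation sumset_list :: "nat set list \<Rightarrow> nat set" where
  "sumset_list \<equiv> mprod sumset {0}"

lemma sumset_list_Nil [simp]: "sumset_list [] = {0}"
  by (simp add: mprod_def)

lemma sumset_list_Cons [simp]: "sumset_list (x # xs) = sumset x (sumset_list xs)"
  by (simp add: mprod_def)

lemma sumset_list_append: "sumset_list (xs @ ys) = sumset (sumset_list xs) (sumset_list ys)"
  by (induction xs) (auto simp: sumset_assoc)

lemma sumset_list_in_Pfin: "set xs \<subseteq> Pfin \<Longrightarrow> sumset_list xs \<in> Pfin"
  by (induction xs) (auto intro: sumset_in_Pfin)

lemma Max_sumset_list: "set xs \<subseteq> Pfin \<Longrightarrow> Max (sumset_list xs) = sum_list (map Max xs)"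
  by (induction xs) (auto simp: Max_sumset sumset_list_in_Pfin)

lemma zero_in_sumset_list: "\<forall>x\<in>set xs. 0 \<in> x \<Longrightarrow> 0 \<in> sumset_list xs"
  by (induction xs) (auto simp: zero_in_sumset_iff)

lemma sumset_list_filter:
  "sumset_list xs = sumset (sumset_list (filter P xs)) (sumset_list (filter (\<lambda>x. \<not> P x) xs))"
  by (induction xs) (auto simp: sumset_assoc sumset_left_commute)

lemma sumset_list_replicate_1: "sumset_list (replicate k {1}) = {k}"
  by (induction k) (auto simp: sumset_singleton)

lemma sumset_list_replicate_01: "sumset_list (replicate j {0, 1}) = {0..j}"
  by (induction j) (simp, simp only: replicate_Suc sumset_list_Cons sumset_01_interval)

lemma mlengths_Pfin:
  "mlengths Pfin sumset {0} a = {length xs | xs. set xs \<subseteq> Collect Pfin_atom \<and> a = sumset_list xs}"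
  by (auto simp: mlengths_def munit_Pfin_iff)

lemma length_le_Max_sumset_list:
  assumes "set xs \<subseteq> Collect Pfin_atom"
  shows "length xs \<le> Max (sumset_list xs)"
proof -
  have "set xs \<subseteq> Pfin"
    using assms by (auto simp: Pfin_atom_iff)
  then have "Max (sumset_list xs) = sum_list (map Max xs)"
    by (rule Max_sumset_list)
  moreover have "length xs \<le> sum_list (map Max xs)"
    using assms by (induction xs) (simp, fastforce dest: Max_Pfin_atom_ge_1)
  ultimately show ?thesis
    by simp
qed

lemma length_factorization_interval_ge:
  assumes xs: "set xs \<subseteq> Collect Pfin_atom" and eq: "{k..k+N} = sumset_list xs"
    and "N \<noteq> 0" and not_atom: "\<not> Pfin_atom {0..N}"
  shows "k + 2 \<le> length xs"
proof -
  define zs where "zs = filter (\<lambda>a. 0 \<in> a) xs"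
  define ys where "ys = filter (\<lambda>a. 0 \<notin> a) xs"
  have "\<forall>y\<in>set ys. y = {1}"
    using xs Pfin_atom_without_zero by (auto simp: ys_def)
  then have "sumset_list ys = {length ys}"
    using sumset_list_replicate_1[of "length ys"] replicate_length_same[of ys "{1}"] by simp
  then have shifted: "{k..k+N} = sumset {length ys} (sumset_list zs)"
    using eq sumset_list_filter[where P = "\<lambda>a. 0 \<in> a" and xs = xs]
      sumset_commute[of "sumset_list zs"]
    by (simp add: zs_def ys_def)
  have "0 \<in> sumset_list zs"
    by (rule zero_in_sumset_list) (simp add: zs_def)
  then have "length ys \<in> {k..k+N}"
    unfolding shifted by (force simp: sumset_singleton)
  moreover have "k \<in> sumset {length ys} (sumset_list zs)"
    unfolding shifted[symmetric] by simp
  then have "length ys \<le> k"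
    by (auto simp: sumset_singleton)
  ultimately have "length ys = k"
    by simp
  with shifted have "sumset {k} (sumset_list zs) = sumset {k} {0..N}"
    by (simp add: sumset_singleton_interval)
  then have zs_product: "sumset_list zs = {0..N}"
    by (rule sumset_singleton_cancel)
  have "2 \<le> length zs"
  proof (rule ccontr)
    assume "\<not> 2 \<le> length zs"
    then consider "zs = []" | A where "zs = [A]"
      by (cases zs; cases "tl zs") auto
    then show False
    proof cases
      case 1
      have "N \<in> sumset_list zs"
        using zs_product by simp
      with 1 \<open>N \<noteq> 0\<close> show False
        by simp
    next
      case 2
      have "set zs \<subseteq> set xs"
        by (auto simp: zs_def)
      with 2 xs have "Pfin_atom A"
        by auto
      moreover have "A = {0..N}"
        using 2 zs_product by simp
      ultimately show False
        using not_atom by simp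
    qed
  qed
  moreover have "length zs + length ys = length xs"
    unfolding zs_def ys_def by (rule sum_length_filter_compl)
  ultimately show ?thesis
    using \<open>length ys = k\<close> by simp
qed

lemma mlengths_interval:
  assumes "even N" "2 \<le> N"
  shows "mlengths Pfin sumset {0} {k..k+N} \<subseteq> {k+2..k+N}"
    and "k + 2 \<in> mlengths Pfin sumset {0} {k..k+N}"
    and "k + N \<in> mlengths Pfin sumset {0} {k..k+N}"
proof -
  have odd: "odd (N - 1)" and N: "N - 1 + 1 = N"
    using assms by auto
  have atom_1: "Pfin_atom {1}"
    by (rule Pfin_atom_if_Max_eq_1) simp_all
  have atom_01: "Pfin_atom {0, 1}"
    by (rule Pfin_atom_if_Max_eq_1) (simp_all add: Pfin_def)
  show "mlengths Pfin sumset {0} {k..k+N} \<subseteq> {k+2..k+N}"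
  proof
    fix l assume "l \<in> mlengths Pfin sumset {0} {k..k+N}"
    then obtain xs where xs: "set xs \<subseteq> Collect Pfin_atom" "{k..k+N} = sumset_list xs"
      and l: "l = length xs"
      by (auto simp: mlengths_Pfin)
    have "Max {k..k+N} = k + N"
      by (rule Max_eqI) auto
    then have "l \<le> k + N"
      using length_le_Max_sumset_list[OF xs(1)] xs(2) l by simp
    moreover have "k + 2 \<le> l"
      using length_factorization_interval_ge[OF xs] interval_not_Pfin_atom[OF odd] N assms l
      by simp
    ultimately show "l \<in> {k+2..k+N}"
      by simp
  qed
  show "k + N \<in> mlengths Pfin sumset {0} {k..k+N}"
    unfolding mlengths_Pfin
  proof (intro CollectI exI conjI)
    let ?xs = "replicate k {1} @ replicate N {0, 1::nat}"
    show "set ?xs \<subseteq> Collect Pfin_atom"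
      using atom_1 atom_01 by auto
    show "{k..k+N} = sumset_list ?xs"
      by (simp only: sumset_list_append sumset_list_replicate_1 sumset_list_replicate_01
          sumset_singleton_interval)
  qed simp
  show "k + 2 \<in> mlengths Pfin sumset {0} {k..k+N}"
    unfolding mlengths_Pfin
  proof (intro CollectI exI conjI)
    let ?xs = "replicate k {1} @ [{0, 1::nat}, zero_and_odds (N - 1)]"
    show "set ?xs \<subseteq> Collect Pfin_atom"
      using atom_1 atom_01 Pfin_atom_zero_and_odds[OF odd] by auto
    have "sumset_list [{0, 1}, zero_and_odds (N - 1)] = {0..N}"
      using sumset_01_zero_and_odds[OF odd] N by simp
    then show "{k..k+N} = sumset_list ?xs"
      by (simp only: sumset_list_append sumset_list_replicate_1 sumset_singleton_interval)
  qed simp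
qed

lemma Pfin_fully_elastic: "fully_elastic Pfin sumset {0}"
  unfolding fully_elastic_def
proof (intro allI impI)
  fix q :: rat assume "1 < q \<and> ereal (real_of_rat q) < rho_monoid Pfin sumset {0}"
  then have "1 < q" by simp
  obtain a b where q: "quotient_of q = (a, b)"
    by fastforce
  then have "0 < b" and q_eq: "q = of_int a / of_int b"
    by (simp_all add: quotient_of_denom_pos quotient_of_div)
  with \<open>1 < q\<close> have "b < a"
    by (simp add: less_divide_eq)
  define m n where "m = nat a" and "n = nat b"
  have "1 \<le> n" "n < m"
    using \<open>0 < b\<close> \<open>b < a\<close> by (auto simp: m_def n_def)
  define k N where "k = 2 * n - 2" and "N = 2 * (m - n) + 2"
  have "even N" "2 \<le> N" and k_2: "k + 2 = 2 * n" and k_N: "k + N = 2 * m"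
    using \<open>1 \<le> n\<close> \<open>n < m\<close> by (simp_all add: k_def N_def)
  define L where "L = mlengths Pfin sumset {0} {k..k+N}"
  have bounds: "L \<subseteq> {2*n..2*m}" "2*n \<in> L" "2*m \<in> L"
    using mlengths_interval[OF \<open>even N\<close> \<open>2 \<le> N\<close>, of k, folded L_def]
    unfolding k_2 k_N by simp_all
  then have "finite L"
    using finite_subset by blast
  with bounds \<open>n < m\<close> have "Max L = 2 * m" "Min L = 2 * n" "L \<noteq> {0}"
    by (auto intro!: Max_eqI Min_eqI)
  then have "rho_len L = ereal (real m / real n)"
    by (simp add: rho_len_def)
  also have "real m / real n = real_of_rat q"
    using \<open>0 < b\<close> \<open>b < a\<close> by (simp add: q_eq m_def n_def of_rat_divide)
  finally have "rho_len (mlengths Pfin sumset {0} {k..k+N}) = ereal (real_of_rat q)"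
    unfolding L_def .
  moreover have "{k..k+N} \<in> Pfin"
    by (simp add: Pfin_def)
  ultimately show "\<exists>A\<in>Pfin. rho_len (mlengths Pfin sumset {0} A) = ereal (real_of_rat q)"
    by blast
qed

section \<open>The prime {1} and the decomposition of the power monoid\<close>

lemma setpow_1: "setpow k {1} = {k}"
  unfolding setpow_def by (induction k) (simp_all add: sumset_singleton)

lemma Fgen_eq: "Fgen = {{k} | k. True}"
  unfolding Fgen_def setpow_1 ..

lemma mdvd_1_iff:
  assumes "A \<in> Pfin"
  shows "mdvd Pfin sumset {1} A \<longleftrightarrow> 0 \<notin> A"
proof
  assume "0 \<notin> A"
  then have "A = sumset {1} ((\<lambda>x. x - 1) ` A)"
    by (rule sumset_shift_1)
  moreover have "(\<lambda>x. x - 1) ` A \<in> Pfin"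
    using assms by (simp add: Pfin_def)
  ultimately show "mdvd Pfin sumset {1} A"
    unfolding mdvd_def by blast
qed (auto simp: mdvd_def sumset_singleton)

lemma mprime_1: "mprime Pfin sumset {0} {1}"
  unfolding mprime_def munit_Pfin_iff
proof (intro conjI ballI impI)
  fix a b assume a: "a \<in> Pfin" and b: "b \<in> Pfin" and "mdvd Pfin sumset {1} (sumset a b)"
  then have "0 \<notin> sumset a b"
    using mdvd_1_iff[OF sumset_in_Pfin[OF a b]] by blast
  then have "0 \<notin> a \<or> 0 \<notin> b"
    using zero_in_sumset_iff by blast
  then show "mdvd Pfin sumset {1} a \<or> mdvd Pfin sumset {1} b"
    using mdvd_1_iff[OF a] mdvd_1_iff[OF b] by blast
qed simp_all

lemma mcancellative_1: "mcancellative Pfin sumset {1}"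
  unfolding mcancellative_def by (auto dest: sumset_singleton_cancel)

lemma Pfin0_eq: "Pfin0 = {A \<in> Pfin. 0 \<in> A}"
  by (auto simp: Pfin0_def Pfin_def)

lemma bij_betw_Fgen_times_Pfin0: "bij_betw (\<lambda>(x, B). sumset x B) (Fgen \<times> Pfin0) Pfin"
proof (rule bij_betw_imageI)
  show "inj_on (\<lambda>(x, B). sumset x B) (Fgen \<times> Pfin0)"
  proof (rule inj_onI, clarsimp simp: Fgen_eq)
    fix k k' B B' assume B: "B \<in> Pfin0" and B': "B' \<in> Pfin0"
      and eq: "sumset {k} B = sumset {k'} B'"
    have "k \<in> sumset {k'} B'" "k' \<in> sumset {k} B"
      using B B' eq by (force simp: sumset_iff Pfin0_def)+
    then have "k = k'"
      by (auto simp: sumset_singleton)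
    with eq show "k = k' \<and> B = B'"
      by (simp add: sumset_singleton_cancel)
  qed
  show "(\<lambda>(x, B). sumset x B) ` (Fgen \<times> Pfin0) = Pfin"
  proof (intro equalityI subsetI)
    fix A assume "A \<in> Pfin"
    then have "finite A" "A \<noteq> {}"
      by (simp_all add: Pfin_def)
    then have "Min A \<in> A" "\<forall>x\<in>A. Min A \<le> x"
      by simp_all
    have shift: "A = sumset {Min A} ((\<lambda>x. x - Min A) ` A)"
      using \<open>\<forall>x\<in>A. Min A \<le> x\<close> by (rule sumset_shift)
    have "0 \<in> (\<lambda>x. x - Min A) ` A"
      using \<open>Min A \<in> A\<close> by (rule image_eqI[rotated]) simp
    with \<open>finite A\<close> have "(\<lambda>x. x - Min A) ` A \<in> Pfin0"
      by (auto simp: Pfin0_def)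
    with shift show "A \<in> (\<lambda>(x, B). sumset x B) ` (Fgen \<times> Pfin0)"
      by (force simp: Fgen_eq)
  qed (auto simp: Fgen_eq Pfin0_eq intro: sumset_in_Pfin)
qed

section \<open>Monomial ideals\<close>

definition monom_dvd :: "('v \<Rightarrow>\<^sub>0 nat) \<Rightarrow> ('v \<Rightarrow>\<^sub>0 nat) \<Rightarrow> bool" where
  "monom_dvd g m \<longleftrightarrow> (\<forall>v. Poly_Mapping.lookup g v \<le> Poly_Mapping.lookup m v)"

definition monomial_ideal :: "('v \<Rightarrow>\<^sub>0 nat) set \<Rightarrow> (('v \<Rightarrow>\<^sub>0 nat) \<Rightarrow>\<^sub>0 'a::comm_ring_1) set" where
  "monomial_ideal G = {p. \<forall>m\<in>Poly_Mapping.keys p. \<exists>g\<in>G. monom_dvd g m}"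

lemma monom_dvd_add_left: "monom_dvd g m \<Longrightarrow> monom_dvd g (d + m)"
  by (auto simp: monom_dvd_def lookup_add intro: trans_le_add2)

lemma monom_dvd_add: "monom_dvd g m \<Longrightarrow> monom_dvd h n \<Longrightarrow> monom_dvd (g + h) (m + n)"
  by (auto simp: monom_dvd_def lookup_add intro: add_mono)

lemma monom_dvdE:
  assumes "monom_dvd g m"
  obtains d where "m = d + g"
proof
  show "m = (m - g) + g"
    using assms by (intro poly_mapping_eqI) (simp add: monom_dvd_def lookup_add lookup_minus)
qed

lemma is_ideal_monomial_ideal: "is_ideal (monomial_ideal G :: (('v \<Rightarrow>\<^sub>0 nat) \<Rightarrow>\<^sub>0 'a::comm_ring_1) set)"
  unfolding is_ideal_def
proof (intro conjI ballI allI)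
  fix p q :: "('v \<Rightarrow>\<^sub>0 nat) \<Rightarrow>\<^sub>0 'a"
  assume "p \<in> monomial_ideal G" "q \<in> monomial_ideal G"
  then show "p + q \<in> monomial_ideal G"
    using keys_add[of p q] by (auto simp: monomial_ideal_def)
next
  fix p r :: "('v \<Rightarrow>\<^sub>0 nat) \<Rightarrow>\<^sub>0 'a"
  assume p: "p \<in> monomial_ideal G"
  show "r * p \<in> monomial_ideal G"
    unfolding monomial_ideal_def
  proof (intro CollectI ballI)
    fix m assume "m \<in> Poly_Mapping.keys (r * p)"
    then obtain s t where "m = s + t" "t \<in> Poly_Mapping.keys p"
      using keys_mult[of r p] by auto
    with p show "\<exists>g\<in>G. monom_dvd g m"
      by (auto simp: monomial_ideal_def intro: monom_dvd_add_left)
  qed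
qed (simp add: monomial_ideal_def)

lemma single_in_monomial_ideal_iff:
  "Poly_Mapping.single m c \<in> monomial_ideal G \<longleftrightarrow> c = 0 \<or> (\<exists>g\<in>G. monom_dvd g m)"
  by (auto simp: monomial_ideal_def)

lemma monomial_ideal_zero: "monomial_ideal {0} = UNIV"
  by (simp add: monomial_ideal_def monom_dvd_def)

lemma is_ideal_sum:
  assumes "is_ideal K" "\<forall>i\<in>S. f i \<in> K"
  shows "sum f S \<in> K"
  using assms(2) by (induction S rule: infinite_finite_induct) (use assms(1) in \<open>auto simp: is_ideal_def\<close>)

lemma sum_single_keys: "(\<Sum>m\<in>Poly_Mapping.keys p. Poly_Mapping.single m (Poly_Mapping.lookup p m)) = p"
  by (intro poly_mapping_eqI) (simp add: lookup_sum lookup_single when_def in_keys_iff)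

lemma ideal_prod_monomial_ideal:
  "ideal_prod (monomial_ideal G) (monomial_ideal H) = monomial_ideal {g + h | g h. g \<in> G \<and> h \<in> H}"
    (is "ideal_prod ?I ?J = ?M")
proof (intro equalityI)
  let ?P = "{a * b | a b. a \<in> ?I \<and> b \<in> ?J}"
  have "?P \<subseteq> ?M"
  proof clarify
    fix a b assume a: "a \<in> ?I" and b: "b \<in> ?J"
    show "a * b \<in> ?M"
      unfolding monomial_ideal_def
    proof (intro CollectI ballI)
      fix m assume "m \<in> Poly_Mapping.keys (a * b)"
      then obtain s t where m: "m = s + t" "s \<in> Poly_Mapping.keys a" "t \<in> Poly_Mapping.keys b"
        using keys_mult[of a b] by auto
      then obtain g h where "g \<in> G" "monom_dvd g s" "h \<in> H" "monom_dvd h t"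
        using a b unfolding monomial_ideal_def by blast
      then show "\<exists>gh\<in>{g + h |g h. g \<in> G \<and> h \<in> H}. monom_dvd gh m"
        unfolding m(1) by (blast intro: monom_dvd_add)
    qed
  qed
  then show "ideal_prod ?I ?J \<subseteq> ?M"
    unfolding ideal_prod_def using is_ideal_monomial_ideal by blast
  show "?M \<subseteq> ideal_prod ?I ?J"
    unfolding ideal_prod_def
  proof (intro subsetI InterI, clarify)
    fix p K assume p: "p \<in> ?M" and K: "is_ideal K" and "?P \<subseteq> K"
    \<comment> \<open>p is the sum of its monomials, each a multiple of a product of two generators\<close>
    have "Poly_Mapping.single m (Poly_Mapping.lookup p m) \<in> K" if "m \<in> Poly_Mapping.keys p" for m
    proof -
      obtain g h where "g \<in> G" "h \<in> H" "monom_dvd (g + h) m"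
        using p \<open>m \<in> Poly_Mapping.keys p\<close> by (auto simp: monomial_ideal_def)
      then obtain d where "m = (d + g) + h"
        by (metis add.assoc monom_dvdE)
      then have "Poly_Mapping.single m (Poly_Mapping.lookup p m) =
          Poly_Mapping.single (d + g) (Poly_Mapping.lookup p m) * Poly_Mapping.single h 1"
        by (simp add: mult_single)
      also have "\<dots> \<in> ?P"
        using \<open>g \<in> G\<close> \<open>h \<in> H\<close> by (fastforce simp: single_in_monomial_ideal_iff monom_dvd_def lookup_add)
      finally show ?thesis
        using \<open>?P \<subseteq> K\<close> by blast
    qed
    then show "p \<in> K"
      using is_ideal_sum[OF K] sum_single_keys[of p] by metis
  qed
qed

section \<open>Embedding the power monoid into the ideals of a polynomial ring\<close>

definition hom_exp :: "'v \<Rightarrow> 'v \<Rightarrow> nat \<Rightarrow> nat \<Rightarrow> ('v \<Rightarrow>\<^sub>0 nat)" where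
  "hom_exp x y d a = Poly_Mapping.single x a + Poly_Mapping.single y (d - a)"

lemma lookup_hom_exp:
  "x \<noteq> y \<Longrightarrow> Poly_Mapping.lookup (hom_exp x y d a) v = (if v = x then a else if v = y then d - a else 0)"
  by (auto simp: hom_exp_def lookup_add lookup_single)

lemma monom_dvd_hom_exp_iff:
  "x \<noteq> y \<Longrightarrow> monom_dvd (hom_exp x y d a) (hom_exp x y e b) \<longleftrightarrow> a \<le> b \<and> d - a \<le> e - b"
  by (auto simp: monom_dvd_def lookup_hom_exp)

lemma hom_exp_add:
  "x \<noteq> y \<Longrightarrow> a \<le> d \<Longrightarrow> b \<le> e \<Longrightarrow> hom_exp x y d a + hom_exp x y e b = hom_exp x y (d + e) (a + b)"
  by (intro poly_mapping_eqI) (simp add: lookup_add lookup_hom_exp)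

definition hom_exps :: "'v \<Rightarrow> 'v \<Rightarrow> nat set \<Rightarrow> ('v \<Rightarrow>\<^sub>0 nat) set" where
  "hom_exps x y A = hom_exp x y (Max A) ` A"

lemma hom_exps_sumset:
  assumes "x \<noteq> y" "A \<in> Pfin" "B \<in> Pfin"
  shows "hom_exps x y (sumset A B) = {g + h | g h. g \<in> hom_exps x y A \<and> h \<in> hom_exps x y B}"
proof -
  have sum: "hom_exp x y (Max A) a + hom_exp x y (Max B) b = hom_exp x y (Max (sumset A B)) (a + b)"
    if "a \<in> A" "b \<in> B" for a b
    using assms that by (simp add: hom_exp_add Max_sumset Pfin_def)
  show ?thesis
    unfolding hom_exps_def
  proof (intro equalityI subsetI)
    fix z assume "z \<in> hom_exp x y (Max (sumset A B)) ` sumset A B"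
    then obtain a b where "a \<in> A" "b \<in> B" "z = hom_exp x y (Max (sumset A B)) (a + b)"
      by (auto simp: sumset_iff)
    then show "z \<in> {g + h |g h. g \<in> hom_exp x y (Max A) ` A \<and> h \<in> hom_exp x y (Max B) ` B}"
      by (intro CollectI exI[of _ "hom_exp x y (Max A) a"] exI[of _ "hom_exp x y (Max B) b"])
        (simp add: sum)
  next
    fix z assume "z \<in> {g + h |g h. g \<in> hom_exp x y (Max A) ` A \<and> h \<in> hom_exp x y (Max B) ` B}"
    then obtain a b where ab: "a \<in> A" "b \<in> B"
      and z: "z = hom_exp x y (Max A) a + hom_exp x y (Max B) b"
      by blast
    have "a + b \<in> sumset A B"
      using ab by (auto simp: sumset_iff)
    then show "z \<in> hom_exp x y (Max (sumset A B)) ` sumset A B"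
      unfolding z sum[OF ab] by (rule imageI)
  qed
qed

lemma dominated_subset:
  assumes "A \<in> Pfin" "B \<in> Pfin" "Max A = Max B"
    and dominated: "\<forall>a\<in>A. \<exists>b\<in>B. b \<le> a \<and> Max B - b \<le> Max A - a"
  shows "A \<subseteq> B"
proof
  fix a assume "a \<in> A"
  with dominated obtain b where "b \<in> B" "b \<le> a" "Max B - b \<le> Max A - a"
    by blast
  moreover have "a \<le> Max A" "b \<le> Max B"
    using assms(1,2) \<open>a \<in> A\<close> \<open>b \<in> B\<close> by (simp_all add: Pfin_def)
  ultimately have "a = b"
    using \<open>Max A = Max B\<close> by arith
  with \<open>b \<in> B\<close> show "a \<in> B"
    by simp
qed

lemma Pfin_eqI_dominating:
  assumes A: "A \<in> Pfin" and B: "B \<in> Pfin"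
    and AB: "\<forall>a\<in>A. \<exists>b\<in>B. b \<le> a \<and> Max B - b \<le> Max A - a"
    and BA: "\<forall>b\<in>B. \<exists>a\<in>A. a \<le> b \<and> Max A - a \<le> Max B - b"
  shows "A = B"
proof -
  have "Max A \<in> A" "Max B \<in> B"
    using A B by (simp_all add: Pfin_def)
  then have "Max B \<le> Max A" "Max A \<le> Max B"
    using AB BA by fastforce+
  then have "Max A = Max B"
    by simp
  then show ?thesis
    using dominated_subset A B AB BA by (metis subset_antisym)
qed

lemma monomial_ideal_hom_exps_inj:
  fixes x y :: 'v
  assumes "x \<noteq> y"
  shows "inj_on (\<lambda>A. monomial_ideal (hom_exps x y A) :: (('v \<Rightarrow>\<^sub>0 nat) \<Rightarrow>\<^sub>0 'a::comm_ring_1) set) Pfin"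
proof (rule inj_onI)
  have dominated: "\<forall>a\<in>A. \<exists>b\<in>B. b \<le> a \<and> Max B - b \<le> Max A - a"
    if "(monomial_ideal (hom_exps x y A) :: (('v \<Rightarrow>\<^sub>0 nat) \<Rightarrow>\<^sub>0 'a) set) = monomial_ideal (hom_exps x y B)"
    for A B
  proof
    fix a assume "a \<in> A"
    then have "(Poly_Mapping.single (hom_exp x y (Max A) a) 1 :: ('v \<Rightarrow>\<^sub>0 nat) \<Rightarrow>\<^sub>0 'a) \<in> monomial_ideal (hom_exps x y A)"
      by (auto simp: single_in_monomial_ideal_iff hom_exps_def monom_dvd_def)
    then have "(Poly_Mapping.single (hom_exp x y (Max A) a) 1 :: ('v \<Rightarrow>\<^sub>0 nat) \<Rightarrow>\<^sub>0 'a) \<in> monomial_ideal (hom_exps x y B)"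
      using that by simp
    then obtain b where "b \<in> B" "monom_dvd (hom_exp x y (Max B) b) (hom_exp x y (Max A) a)"
      by (auto simp: single_in_monomial_ideal_iff hom_exps_def)
    with assms show "\<exists>b\<in>B. b \<le> a \<and> Max B - b \<le> Max A - a"
      by (auto simp: monom_dvd_hom_exp_iff)
  qed
  fix A B assume "A \<in> Pfin" "B \<in> Pfin"
    and "(monomial_ideal (hom_exps x y A) :: (('v \<Rightarrow>\<^sub>0 nat) \<Rightarrow>\<^sub>0 'a) set) = monomial_ideal (hom_exps x y B)"
  then show "A = B"
    using Pfin_eqI_dominating dominated by metis
qed

lemma Pfin_embeds_into_nonzero_ideals:
  fixes x y :: 'v
  assumes "x \<noteq> y"
  shows "\<exists>\<phi> :: nat set \<Rightarrow> (('v \<Rightarrow>\<^sub>0 nat) \<Rightarrow>\<^sub>0 'a::comm_ring_1) set.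
           inj_on \<phi> Pfin \<and> \<phi> ` Pfin \<subseteq> nonzero_ideals \<and> \<phi> {0} = UNIV \<and>
           (\<forall>A\<in>Pfin. \<forall>B\<in>Pfin. \<phi> (sumset A B) = ideal_prod (\<phi> A) (\<phi> B))"
proof (intro exI conjI)
  let ?\<phi> = "\<lambda>A. monomial_ideal (hom_exps x y A) :: (('v \<Rightarrow>\<^sub>0 nat) \<Rightarrow>\<^sub>0 'a) set"
  show "inj_on ?\<phi> Pfin"
    using assms by (rule monomial_ideal_hom_exps_inj)
  show "?\<phi> ` Pfin \<subseteq> nonzero_ideals"
  proof clarify
    fix A assume "A \<in> Pfin"
    then obtain a where "a \<in> A"
      by (auto simp: Pfin_def)
    then have "Poly_Mapping.single (hom_exp x y (Max A) a) 1 \<in> ?\<phi> A"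
      by (auto simp: single_in_monomial_ideal_iff hom_exps_def monom_dvd_def)
    moreover have "Poly_Mapping.single (hom_exp x y (Max A) a) (1::'a) \<noteq> 0"
      by (metis lookup_single_eq lookup_zero zero_neq_one)
    ultimately show "?\<phi> A \<in> nonzero_ideals"
      by (auto simp: nonzero_ideals_def is_ideal_monomial_ideal)
  qed
  show "?\<phi> {0} = UNIV"
    by (simp add: hom_exps_def hom_exp_def monomial_ideal_zero)
  show "\<forall>A\<in>Pfin. \<forall>B\<in>Pfin. ?\<phi> (sumset A B) = ideal_prod (?\<phi> A) (?\<phi> B)"
    using assms by (simp add: hom_exps_sumset ideal_prod_monomial_ideal)
qed

theorem proposition5p13:
  shows
    "(mprime Pfin sumset {0} {1} \<and> mcancellative Pfin sumset {1}
      \<and> (\<forall>x\<in>Fgen. \<exists>!k. x = setpow k {1})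
      \<and> Pfin0 \<subseteq> Pfin \<and> {0} \<in> Pfin0 \<and> (\<forall>A\<in>Pfin0. \<forall>B\<in>Pfin0. sumset A B \<in> Pfin0)
      \<and> bij_betw (\<lambda>(x, B). sumset x B) (Fgen \<times> Pfin0) Pfin
      \<and> fully_elastic Pfin sumset {0})
   \<and> (card (UNIV :: 'v::finite set) \<ge> 2 \<longrightarrow>
        BF_monoid (nonzero_ideals :: ('v, 'a::idom) mpoly_ring set set) ideal_prod UNIV \<longrightarrow>
        (\<exists>\<phi> :: nat set \<Rightarrow> ('v, 'a) mpoly_ring set.
           inj_on \<phi> Pfin \<and> \<phi> ` Pfin \<subseteq> nonzero_ideals \<and> \<phi> {0} = UNIV \<and>
           (\<forall>A\<in>Pfin. \<forall>B\<in>Pfin. \<phi> (sumset A B) = ideal_prod (\<phi> A) (\<phi> B))))"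
proof (intro conjI impI)
  show "mprime Pfin sumset {0} {1}" by (rule mprime_1)
  show "mcancellative Pfin sumset {1}" by (rule mcancellative_1)
  show "\<forall>x\<in>Fgen. \<exists>!k. x = setpow k {1}" unfolding Fgen_eq setpow_1 by auto
  show "Pfin0 \<subseteq> Pfin" "{0} \<in> Pfin0" "\<forall>A\<in>Pfin0. \<forall>B\<in>Pfin0. sumset A B \<in> Pfin0"
    by (auto simp: Pfin0_eq zero_in_sumset_iff intro: sumset_in_Pfin)
  show "bij_betw (\<lambda>(x, B). sumset x B) (Fgen \<times> Pfin0) Pfin" by (rule bij_betw_Fgen_times_Pfin0)
  show "fully_elastic Pfin sumset {0}" by (rule Pfin_fully_elastic)
  assume "card (UNIV :: 'v set) \<ge> 2"
  then obtain x y :: 'v where "x \<noteq> y"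
    by (metis UNIV_I card_le_Suc0_iff_eq finite_UNIV not_less_eq_eq numeral_2_eq_2)
  then show "\<exists>\<phi> :: nat set \<Rightarrow> ('v, 'a) mpoly_ring set.
           inj_on \<phi> Pfin \<and> \<phi> ` Pfin \<subseteq> nonzero_ideals \<and> \<phi> {0} = UNIV \<and>
           (\<forall>A\<in>Pfin. \<forall>B\<in>Pfin. \<phi> (sumset A B) = ideal_prod (\<phi> A) (\<phi> B))"
    by (rule Pfin_embeds_into_nonzero_ideals)
qed

end
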